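(* Let $\Sigma$ be an alphabet with $|\Sigma|\ge 2$, let $n\ge 2$ and $L\ge 1$ be integers, and let $\mathcal{H}$ be a finite family of functions $\Sigma^n\to[0,2^L)$ such that every $h\in\mathcal{H}$ is recursive. Then $\mathcal{H}$ is not $3$-wise trailing-zero independent.
   Context: An $n$-gram is an element $(x_1,\dots,x_n)\in\Sigma^n$. A hash function $h:\Sigma^n\to[0,2^L)$ is recursive if there is a function $F$ (which may depend on $h$) such that $h(x_2,\dots,x_{n+1})=F(h(x_1,\dots,x_n),x_1,x_{n+1})$ for all $x_1,\dots,x_{n+1}\in\Sigma$. For an integer $y\in[0,2^L)$, $\mathrm{zeros}(y)\in\{0,1,\dots,L\}$ denotes the number of trailing zeros in the $L$-bit binary representation of $y$, with $\mathrm{zeros}(0)=L$. With $h$ drawn uniformly at random from $\mathcal{H}$, the family is $k$-wise trailing-zero independent if for all pairwise distinct $n$-grams $x_1,\dots,x_k$ and all $j_1,\dots,j_k\in\{0,1,\dots,L\}$ one has $P(\mathrm{zeros}(h(x_1))\ge j_1\wedge\cdots\wedge \mathrm{zeros}(h(x_k))\ge j_k)=2^{-j_1-\cdots-j_k}$. *)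

theory Defs
  imports Complex_Main "HOL-Library.Multiset"
begin

definition ngrams :: "'a set \<Rightarrow> nat \<Rightarrow> 'a list set" where
  "ngrams \<Sigma> n = {xs. length xs = n \<and> set xs \<subseteq> \<Sigma>}"

definition maps_into_range :: "'a set \<Rightarrow> nat \<Rightarrow> nat \<Rightarrow> ('a list \<Rightarrow> nat) \<Rightarrow> bool" where
  "maps_into_range \<Sigma> n L h \<longleftrightarrow> (\<forall>x \<in> ngrams \<Sigma> n. h x < 2 ^ L)"

definition recursive_hash :: "'a set \<Rightarrow> nat \<Rightarrow> ('a list \<Rightarrow> nat) \<Rightarrow> bool" where
  "recursive_hash \<Sigma> n h \<longleftrightarrow>
     (\<exists>F :: nat \<Rightarrow> 'a \<Rightarrow> 'a \<Rightarrow> nat. \<forall>xs \<in> ngrams \<Sigma> (Suc n).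
        h (tl xs) = F (h (butlast xs)) (hd xs) (last xs))"

text \<open>Number of trailing zeros in the L-bit representation of y; zeros 0 = L.\<close>
definition zeros :: "nat \<Rightarrow> nat \<Rightarrow> nat" where
  "zeros L y = (GREATEST j. j \<le> L \<and> 2 ^ j dvd y)"

text \<open>k-wise trailing-zero independence of a finite family (multiset) H,
  with h drawn uniformly at random from H.\<close>
definition tz_independent ::
  "'a set \<Rightarrow> nat \<Rightarrow> nat \<Rightarrow> nat \<Rightarrow> ('a list \<Rightarrow> nat) multiset \<Rightarrow> bool" where
  "tz_independent \<Sigma> n L k H \<longleftrightarrow>
     (\<forall>x :: nat \<Rightarrow> 'a list. \<forall>j :: nat \<Rightarrow> nat.
        (\<forall>i<k. x i \<in> ngrams \<Sigma> n) \<longrightarrow> inj_on x {..<k} \<longrightarrow> (\<forall>i<k. j i \<le> L) \<longrightarrow>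
        real (size (filter_mset (\<lambda>h. \<forall>i<k. zeros L (h (x i)) \<ge> j i) H)) / real (size H)
          = (1/2::real) ^ (\<Sum>i<k. j i))"

end

theory Submission
  imports Defs
begin

(* Pick letters a \<noteq> b and the three distinct n-grams
     x1 = a b^(n-1),   x2 = a a b^(n-2),   x3 = b^n.
   Rolling x2 by one letter (drop a, append b) gives x1, and rolling x1 gives x3.
   A recursive hash computes the rolled hash from the old hash, the dropped letter
   and the appended letter only, so h x1 = h x2 forces h x1 = h x3.  In particular
   every h with h x1 = h x2 = 0 also has h x3 = 0: the event "zeros(h x_i) \<ge> L for
   i = 1,2,3" coincides with the event "zeros(h x_i) \<ge> L for i = 1,2".
   3-wise trailing-zero independence would give these events the probabilities
   2^(-3L) and 2^(-2L), which differ because L \<ge> 1.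
   The file proves, in order: the characterisation of zeros L y = L; the congruence
   property of recursive hashes under rolling; the general fact that
   tz-independence separates threshold vectors with different sums; the vanishing
   property of the concrete witnesses; and finally the theorem. *)

lemma zeros_full_iff:
  assumes "(y::nat) < 2 ^ L"
  shows "L \<le> zeros L y \<longleftrightarrow> y = 0"
proof
  assume full: "L \<le> zeros L y"
  have "zeros L y \<le> L \<and> 2 ^ zeros L y dvd y"
    unfolding zeros_def by (rule GreatestI_nat[where k=0 and b=L]) auto
  with full have "2 ^ L dvd y" by (metis le_antisym)
  with assms show "y = 0" by (metis dvd_imp_le not_gr0 not_le)
next
  assume "y = 0"
  then show "L \<le> zeros L y"
    unfolding zeros_def by (intro Greatest_le_nat[where b=L]) auto
qed

lemma recursive_hash_roll_cong:
  assumes "recursive_hash \<Sigma> n h"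
    and "c # ys \<in> ngrams \<Sigma> n" and "c # zs \<in> ngrams \<Sigma> n" and "d \<in> \<Sigma>"
    and "h (c # ys) = h (c # zs)"
  shows "h (ys @ [d]) = h (zs @ [d])"
proof -
  obtain F where F: "\<forall>xs \<in> ngrams \<Sigma> (Suc n). h (tl xs) = F (h (butlast xs)) (hd xs) (last xs)"
    using assms(1) by (auto simp: recursive_hash_def)
  have "c # ys @ [d] \<in> ngrams \<Sigma> (Suc n)" "c # zs @ [d] \<in> ngrams \<Sigma> (Suc n)"
    using assms(2-4) by (auto simp: ngrams_def)
  then have "h (ys @ [d]) = F (h (c # ys)) c d" "h (zs @ [d]) = F (h (c # zs)) c d"
    using F by (auto simp: butlast_append)
  with assms(5) show ?thesis by simp
qed

lemma tz_independent_same_event: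
  assumes ind: "tz_independent \<Sigma> n L k H"
    and x: "\<forall>i<k. x i \<in> ngrams \<Sigma> n" "inj_on x {..<k}"
    and j: "\<forall>i<k. j i \<le> L" and j': "\<forall>i<k. j' i \<le> L"
    and same: "\<forall>h \<in># H. (\<forall>i<k. j i \<le> zeros L (h (x i))) \<longleftrightarrow> (\<forall>i<k. j' i \<le> zeros L (h (x i)))"
  shows "(\<Sum>i<k. j i) = (\<Sum>i<k. j' i)"
proof -
  have "filter_mset (\<lambda>h. \<forall>i<k. j i \<le> zeros L (h (x i))) H
      = filter_mset (\<lambda>h. \<forall>i<k. j' i \<le> zeros L (h (x i))) H"
    using same by (intro filter_mset_cong) auto
  moreover have
    "real (size (filter_mset (\<lambda>h. \<forall>i<k. j i \<le> zeros L (h (x i))) H)) / real (size H)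
       = (1/2::real) ^ (\<Sum>i<k. j i)"
    "real (size (filter_mset (\<lambda>h. \<forall>i<k. j' i \<le> zeros L (h (x i))) H)) / real (size H)
       = (1/2::real) ^ (\<Sum>i<k. j' i)"
    using ind x j j' unfolding tz_independent_def by blast+
  ultimately have "(1/2::real) ^ (\<Sum>i<k. j i) = (1/2) ^ (\<Sum>i<k. j' i)" by simp
  then show ?thesis by (simp add: power_divide)
qed

text \<open>The witness n-grams: rolling a a b^m yields a b^(m+1), and rolling that yields
  b^(m+2); hence if a recursive hash vanishes on the first two, it vanishes on b^(m+2).\<close>
lemma recursive_hash_vanishes_on_roll:
  assumes "recursive_hash \<Sigma> (Suc (Suc m)) h" and "a \<in> \<Sigma>" "b \<in> \<Sigma>"
    and "h (a # replicate (Suc m) b) = 0" "h (a # a # replicate m b) = 0"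
  shows "h (replicate (Suc (Suc m)) b) = 0"
proof -
  have "h (replicate (Suc m) b @ [b]) = h ((a # replicate m b) @ [b])"
    using recursive_hash_roll_cong[OF assms(1), of a "replicate (Suc m) b" "a # replicate m b" b]
      assms by (auto simp: ngrams_def set_replicate_conv_if)
  with assms(4) show ?thesis by (simp add: replicate_append_same)
qed

lemma all_less_3: "(\<forall>i<3. P i) \<longleftrightarrow> P 0 \<and> P 1 \<and> P (2::nat)"
  by (auto simp: numeral_3_eq_3 less_Suc_eq eval_nat_numeral)

theorem mainTheorem1:
  fixes \<Sigma> :: "'a set" and n L :: nat and H :: "('a list \<Rightarrow> nat) multiset"
  assumes "\<exists>a\<in>\<Sigma>. \<exists>b\<in>\<Sigma>. a \<noteq> b"
    and "n \<ge> 2" and "L \<ge> 1"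
    and "H \<noteq> {#}"
    and "\<forall>h \<in># H. maps_into_range \<Sigma> n L h"
    and "\<forall>h \<in># H. recursive_hash \<Sigma> n h"
  shows "\<not> tz_independent \<Sigma> n L 3 H"
proof
  assume ind: "tz_independent \<Sigma> n L 3 H"
  obtain a b where ab: "a \<in> \<Sigma>" "b \<in> \<Sigma>" "a \<noteq> b" using assms(1) by blast
  obtain m where n: "n = Suc (Suc m)" using assms(2) by (metis add_2_eq_Suc le_Suc_ex)
  define xs where "xs = [a # replicate (Suc m) b, a # a # replicate m b, replicate (Suc (Suc m)) b]"
  have ngrams: "\<forall>i<3. xs ! i \<in> ngrams \<Sigma> n"
    using ab unfolding all_less_3 by (simp add: xs_def ngrams_def n set_replicate_conv_if)
  have "distinct xs" using ab by (cases m) (auto simp: xs_def)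
  then have inj: "inj_on (nth xs) {..<3}" by (simp add: inj_on_nth xs_def)
  have same_event: "(\<forall>i<3. L \<le> zeros L (h (xs ! i)))
      \<longleftrightarrow> (\<forall>i<3. (if i = 2 then 0 else L) \<le> zeros L (h (xs ! i)))" if "h \<in># H" for h
  proof -
    have "h (xs ! i) < 2 ^ L" if "i < 3" for i
      using assms(5) \<open>h \<in># H\<close> ngrams that by (auto simp: maps_into_range_def)
    then have full: "L \<le> zeros L (h (xs ! i)) \<longleftrightarrow> h (xs ! i) = 0" if "i < 3" for i
      using that zeros_full_iff by blast
    have "recursive_hash \<Sigma> (Suc (Suc m)) h" using assms(6) \<open>h \<in># H\<close> n by simp
    then have "h (xs ! 0) = 0 \<Longrightarrow> h (xs ! 1) = 0 \<Longrightarrow> h (xs ! 2) = 0"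
      using recursive_hash_vanishes_on_roll[OF _ ab(1,2)] by (simp add: xs_def)
    then show ?thesis
      unfolding all_less_3 using full[of 0] full[of 1] full[of 2] by auto
  qed
  have "(\<Sum>i<3::nat. L) = (\<Sum>i<3::nat. if i = 2 then 0 else L)"
    by (rule tz_independent_same_event[OF ind ngrams inj]) (use same_event in simp_all)
  then have "3 * L = 2 * L" by (simp add: numeral_3_eq_3)
  with assms(3) show False by simp
qed

end
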